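(* Let $\phi:M_2\to M_2$ be a linear map with $\sigma_{\mathcal{K}}(\phi(A))=\sigma_{\mathcal{K}}(A)$ for all $A\in M_2$. Then $\phi(E_{11}+E_{21})$ is singular.
   Context: $M_2$ is the space of real $2\times2$ matrices and $E_{ij}$ is the matrix with $1$ in position $(i,j)$ and $0$ elsewhere. Lorentz cone $\mathcal{K}=\{(x_1,x_2)^T:|x_1|\le x_2\}$; a real $\lambda$ is an L-eigenvalue of $A$ if there is a nonzero $x\in\mathcal{K}$ with $(A-\lambda I)x\in\mathcal{K}$ and $x^T(A-\lambda I)x=0$; $\sigma_{\mathcal{K}}(A)$ is the set of L-eigenvalues. *)

theory Defs
  imports "HOL-Analysis.Analysis"
begin

definition lorentz_cone :: "(real ^ 2) set" where
  "lorentz_cone = {x. \<bar>x $ 1\<bar> \<le> x $ 2}"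

definition L_eigenvalue :: "real ^ 2 ^ 2 \<Rightarrow> real \<Rightarrow> bool" where
  "L_eigenvalue A l \<longleftrightarrow>
     (\<exists>x. x \<noteq> 0 \<and> x \<in> lorentz_cone \<and>
          (A - l *\<^sub>R mat 1) *v x \<in> lorentz_cone \<and>
          x \<bullet> ((A - l *\<^sub>R mat 1) *v x) = 0)"

definition L_spectrum :: "real ^ 2 ^ 2 \<Rightarrow> real set" where
  "L_spectrum A = {l. L_eigenvalue A l}"

definition Emat :: "2 \<Rightarrow> 2 \<Rightarrow> real ^ 2 ^ 2" where
  "Emat i j = (\<chi> k l. if k = i \<and> l = j then 1 else 0)"

end

theory Submission
  imports Defs
begin

text \<open>
  Use the null vectors \<open>(1,1)\<close> and \<open>(-1,1)\<close>, which span the two boundary rays of the Lorentz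
  cone, as a basis. Two nonzero cone vectors are orthogonal only if they lie on different boundary
  rays, so for invertible \<open>B\<close> the L-eigenvalue \<open>0\<close> means that \<open>B\<close> maps one boundary ray onto the
  other. The matrix \<open>A = E\<^sub>1\<^sub>1 + E\<^sub>2\<^sub>1\<close> has L-eigenvalues \<open>0\<close> and \<open>1\<close>, and \<open>-A\<close> has \<open>0\<close>; hence
  so do \<open>B = \<phi> A\<close> and \<open>-B = \<phi> (-A)\<close>. If \<open>B\<close> were invertible, the two conditions at \<open>0\<close> would
  force \<open>B\<close> to be antidiagonal in the null basis with entries of opposite signs. For such \<open>B\<close>
  and \<open>\<lambda> > 0\<close>, the vector \<open>(B - \<lambda>I)w\<close> has a negative null coordinate for every nonzero \<open>w\<close>
  in the cone, so \<open>1\<close> is not an L-eigenvalue of \<open>B\<close>.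
\<close>

definition null_plus :: "real ^ 2" where
  "null_plus = vector [1, 1]"

definition null_minus :: "real ^ 2" where
  "null_minus = vector [-1, 1]"

lemma null_plus_component [simp]: "null_plus $ 1 = 1" "null_plus $ 2 = 1"
  by (simp_all add: null_plus_def)

lemma null_minus_component [simp]: "null_minus $ 1 = -1" "null_minus $ 2 = 1"
  by (simp_all add: null_minus_def)

lemma null_plus_neq_0 [simp]: "null_plus \<noteq> 0"
  and null_minus_neq_0 [simp]: "null_minus \<noteq> 0"
  by (auto simp: vec_eq_iff intro!: exI[of _ 2])

lemma null_coordinates:
  "x = ((x$2 + x$1) / 2) *\<^sub>R null_plus + ((x$2 - x$1) / 2) *\<^sub>R null_minus"
  by (simp add: vec_eq_iff forall_2 field_simps)

lemma null_combination_eq_0_iff: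
  "a *\<^sub>R null_plus + b *\<^sub>R null_minus = 0 \<longleftrightarrow> a = 0 \<and> b = 0"
  by (auto simp: vec_eq_iff forall_2)

lemma null_combination_in_lorentz_cone_iff:
  "a *\<^sub>R null_plus + b *\<^sub>R null_minus \<in> lorentz_cone \<longleftrightarrow> 0 \<le> a \<and> 0 \<le> b"
  by (auto simp: lorentz_cone_def abs_le_iff)

lemma inner_null_combination:
  "(a *\<^sub>R null_plus + b *\<^sub>R null_minus) \<bullet> (c *\<^sub>R null_plus + d *\<^sub>R null_minus)
     = 2 * (a * c + b * d)"
  by (simp add: inner_vec_def sum_2 algebra_simps)

lemma lorentz_cone_orthogonal_null_rays:
  assumes "x \<in> lorentz_cone" "y \<in> lorentz_cone" "x \<noteq> 0" "y \<noteq> 0" "x \<bullet> y = 0"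
  shows "(\<exists>a>0. \<exists>b>0. x = a *\<^sub>R null_plus \<and> y = b *\<^sub>R null_minus) \<or>
         (\<exists>a>0. \<exists>b>0. x = a *\<^sub>R null_minus \<and> y = b *\<^sub>R null_plus)"
proof -
  obtain a b c d where x: "x = a *\<^sub>R null_plus + b *\<^sub>R null_minus"
    and y: "y = c *\<^sub>R null_plus + d *\<^sub>R null_minus"
    using null_coordinates by blast
  have nonneg: "0 \<le> a" "0 \<le> b" "0 \<le> c" "0 \<le> d"
    using assms(1,2) by (simp_all add: x y null_combination_in_lorentz_cone_iff)
  have "a * c + b * d = 0"
    using assms(5) by (simp add: x y inner_null_combination)
  then have "a * c = 0" "b * d = 0"
    using nonneg by (simp_all add: add_nonneg_eq_0_iff)
  moreover have "a \<noteq> 0 \<or> b \<noteq> 0" "c \<noteq> 0 \<or> d \<noteq> 0"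
    using assms(3,4) by (simp_all add: x y null_combination_eq_0_iff)
  ultimately consider "0 < a" "b = 0" "c = 0" "0 < d" | "a = 0" "0 < b" "0 < c" "d = 0"
    using nonneg by fastforce
  then show ?thesis
    by cases (auto simp: x y)
qed

lemma L_eigenvalue_of_eigenvector:
  assumes "x \<noteq> 0" "x \<in> lorentz_cone" "A *v x = l *\<^sub>R x"
  shows "L_eigenvalue A l"
proof -
  have "(A - l *\<^sub>R mat 1) *v x = 0"
    using assms(3) by (simp add: matrix_vector_mult_diff_rdistrib scaleR_matrix_vector_assoc[symmetric])
  then show ?thesis
    using assms(1,2) unfolding L_eigenvalue_def by (auto simp: lorentz_cone_def)
qed

lemma invertible_L_eigenvalue_0_swaps_null_rays:
  assumes "invertible B" "L_eigenvalue B 0"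
  shows "(\<exists>t>0. B *v null_plus = t *\<^sub>R null_minus) \<or> (\<exists>t>0. B *v null_minus = t *\<^sub>R null_plus)"
proof -
  obtain x where x: "x \<noteq> 0" "x \<in> lorentz_cone" "B *v x \<in> lorentz_cone" "x \<bullet> (B *v x) = 0"
    using assms(2) by (auto simp: L_eigenvalue_def)
  have "B *v x \<noteq> 0"
    using assms(1) x(1) by (metis invertible_left_inverse matrix_left_invertible_ker)
  have rescale: "\<exists>t>0. B *v p = t *\<^sub>R q"
    if "a > 0" "b > 0" "B *v (a *\<^sub>R p) = b *\<^sub>R q" for a b p q
  proof (intro exI conjI)
    have "B *v p = inverse a *\<^sub>R (B *v (a *\<^sub>R p))"
      using that(1) by (simp add: matrix_vector_mult_scaleR)
    then show "B *v p = (b / a) *\<^sub>R q"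
      using that(3) by (simp add: divide_inverse_commute)
    show "b / a > 0"
      using that(1,2) by simp
  qed
  from lorentz_cone_orthogonal_null_rays[OF x(2,3,1) \<open>B *v x \<noteq> 0\<close> x(4)] show ?thesis
    by (elim disjE exE conjE) (metis rescale)+
qed

lemma invertible_L_eigenvalue_0_pm_antidiagonal:
  assumes "invertible B" "L_eigenvalue B 0" "L_eigenvalue (-B) 0"
  obtains t s where "B *v null_plus = t *\<^sub>R null_minus" "B *v null_minus = s *\<^sub>R null_plus"
    "t * s < 0"
proof -
  have "invertible (-B)"
    using assms(1) by (simp add: invertible_det_nz det_2)
  moreover have "(-B) *v x = - (B *v x)" for x
    by (simp add: matrix_vector_mult_def vec_eq_iff sum_negf)
  ultimately have neg: "(\<exists>t>0. B *v null_plus = - t *\<^sub>R null_minus) \<or>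
                        (\<exists>t>0. B *v null_minus = - t *\<^sub>R null_plus)"
    using invertible_L_eigenvalue_0_swaps_null_rays[OF _ assms(3)]
    by (metis minus_equation_iff scaleR_minus_left)
  have pos: "(\<exists>t>0. B *v null_plus = t *\<^sub>R null_minus) \<or>
             (\<exists>t>0. B *v null_minus = t *\<^sub>R null_plus)"
    using invertible_L_eigenvalue_0_swaps_null_rays[OF assms(1,2)] .
  \<comment> \<open>a null vector cannot go to a positive and a negative multiple of the other one\<close>
  show thesis
    using pos neg that null_plus_neq_0 null_minus_neq_0
    by (smt (verit, ccfv_threshold) mult_neg_pos mult_pos_neg scaleR_cancel_right)
qed

lemma null_antidiagonal_not_L_eigenvalue_pos:
  assumes "B *v null_plus = t *\<^sub>R null_minus" "B *v null_minus = s *\<^sub>R null_plus"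
    and "t * s < 0" "l > 0"
  shows "\<not> L_eigenvalue B l"
proof
  assume "L_eigenvalue B l"
  then obtain w where w: "w \<noteq> 0" "w \<in> lorentz_cone" "(B - l *\<^sub>R mat 1) *v w \<in> lorentz_cone"
    unfolding L_eigenvalue_def by blast
  obtain a b where ab: "w = a *\<^sub>R null_plus + b *\<^sub>R null_minus"
    using null_coordinates by blast
  have nonneg: "0 \<le> a" "0 \<le> b"
    using w(2) by (simp_all add: ab null_combination_in_lorentz_cone_iff)
  have "(B - l *\<^sub>R mat 1) *v w = (b * s - l * a) *\<^sub>R null_plus + (a * t - l * b) *\<^sub>R null_minus"
    by (simp add: ab assms(1,2) algebra_simps scaleR_matrix_vector_assoc[symmetric])
  then have "l * a \<le> b * s" "l * b \<le> a * t"
    using w(3) by (simp_all add: null_combination_in_lorentz_cone_iff)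
  moreover have "a \<noteq> 0 \<or> b \<noteq> 0"
    using w(1) by (simp add: ab null_combination_eq_0_iff)
  ultimately show False
    using nonneg assms(3,4)
    by (smt (verit) mult_pos_neg mult_neg_pos mult_nonneg_nonneg mult_nonneg_nonpos mult_pos_pos)
qed

theorem lemma4p2:
  fixes \<phi> :: "real ^ 2 ^ 2 \<Rightarrow> real ^ 2 ^ 2"
  assumes "linear \<phi>"
    and "\<And>A. L_spectrum (\<phi> A) = L_spectrum A"
  shows "\<not> invertible (\<phi> (Emat 1 1 + Emat 2 1))"
proof
  define A where "A = Emat 1 1 + Emat 2 1"
  define e2 :: "real ^ 2" where "e2 = vector [0, 1]"
  assume "invertible (\<phi> (Emat 1 1 + Emat 2 1))"
  then have inv: "invertible (\<phi> A)"
    by (simp add: A_def)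
  have preserved: "L_eigenvalue (\<phi> X) l \<longleftrightarrow> L_eigenvalue X l" for X l
    using assms(2)[of X] by (auto simp: L_spectrum_def)
  have e2: "e2 \<noteq> 0" "e2 \<in> lorentz_cone" and "null_plus \<in> lorentz_cone"
    by (auto simp: e2_def lorentz_cone_def vec_eq_iff intro!: exI[of _ 2])
  have "L_eigenvalue A 0" "L_eigenvalue (-A) 0"
    by (rule L_eigenvalue_of_eigenvector[OF e2];
        simp add: A_def e2_def Emat_def vec_eq_iff forall_2 matrix_vector_mult_def sum_2)+
  moreover have "L_eigenvalue A 1"
    by (rule L_eigenvalue_of_eigenvector[OF null_plus_neq_0 \<open>null_plus \<in> lorentz_cone\<close>])
      (simp add: A_def Emat_def vec_eq_iff forall_2 matrix_vector_mult_def sum_2)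
  ultimately have "L_eigenvalue (\<phi> A) 0" "L_eigenvalue (- \<phi> A) 0" "L_eigenvalue (\<phi> A) 1"
    using preserved[of "-A"] by (simp_all add: preserved linear_neg[OF assms(1)])
  then obtain t s where "\<phi> A *v null_plus = t *\<^sub>R null_minus"
    "\<phi> A *v null_minus = s *\<^sub>R null_plus" "t * s < 0"
    using invertible_L_eigenvalue_0_pm_antidiagonal[OF inv] by blast
  with \<open>L_eigenvalue (\<phi> A) 1\<close> show False
    using null_antidiagonal_not_L_eigenvalue_pos by (meson zero_less_one)
qed

end
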